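(* Let $G$ be a chordal graph with clique number $3$, let $v_1,\dots,v_n$ be a perfect elimination ordering of $G$, and let $\mathcal S$ be a best choice recoloring for this ordering between two proper $5$-colorings of $G$. Let $x,u,v,w$ be vertices of $G$ with $N^+(x)=\{u,v\}$ and $N^+(u)=\{v,w\}$. Let $i$ be the index with $x=v_i$ and let $c=\max_{i'>i}|\mathcal S_{|v_{i'}}|$. If $x$ is recolored at least $c-1$ times in $\mathcal S$, then: (1) the pattern $u\,w\,v\,u$ occurs at least $c-34$ times in $\mathcal S_{|N^+[u]}$; (2) in the sequence of colors taken by $x$, there are at most $74$ indices at which three consecutive colors are not pairwise distinct.
   Context: Recoloring sequence $\mathcal S=s_1\dots s_t$: sequence of pairs $(v,c)$ (recolor $v$ with $c$) with all intermediate colorings proper $5$-colorings. $\mathcal S_{|X}$ is the subsequence of steps recoloring vertices of $X$; $\mathcal S_{|v}$ is the sequence of colors taken by $v$ and $|\mathcal S_{|v}|$ the number of times $v$ is recolored. A sequence contains the pattern $u\,w\,v\,u$ at an index if the consecutive steps starting there recolor $u$, $w$, $v$, $u$ in this order; occurrences are counted by their starting indices. Orientation: edge $v_iv_j$ with $i<j$ is oriented towards $v_j$; $N^+(y)$ is the set of out-neighbors of $y$ (at most $2$, mutually adjacent), $N^+[y]=N^+(y)\cup\{y\}$; $V_i=\{v_i,\dots,v_n\}$. Best choice recoloring (recursive): for $G[V_n]$, recolor $v_n$ to $\beta(v_n)$ if needed. Given a best choice recoloring $\mathcal S'$ of $G[V_{i+1}]$, extend to $y=v_i$ (starting at $\alpha(y)$):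 let $t_1<\dots<t_\ell$ be the steps of $\mathcal S'$ recoloring an out-neighbor of $y$, with new colors $c_{t_j}$. A color is valid for $y$ at step $t$ if it differs from the colors of the out-neighbors of $y$ just before and just after step $t$. A best choice at step $t$ is: $\beta(y)$ if distinct from $c_t,\dots,c_{t_\ell}$; otherwise any valid color not in $\{c_{t_j}:t_j\ge t\}$; otherwise the valid color appearing latest in $(c_{t_j})_{t_j\ge t}$. Whenever a step of $\mathcal S'$ recolors an out-neighbor of $y$ with the current color of $y$, insert just before it a recoloring of $y$ with a best choice; no other recolorings of $y$ except possibly a final one to $\beta(y)$. A best choice recoloring of $G$ is any sequence obtained by applying this successively to $v_n,\dots,v_1$. *)

theory Defs
  imports Main
begin

definition simple_graph :: "'a set \<Rightarrow> ('a \<Rightarrow> 'a \<Rightarrow> bool) \<Rightarrow> bool" where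
  "simple_graph V E \<longleftrightarrow> finite V \<and> (\<forall>a b. E a b \<longrightarrow> a \<in> V \<and> b \<in> V)
     \<and> (\<forall>a b. E a b \<longrightarrow> E b a) \<and> (\<forall>a. \<not> E a a)"

definition is_cycle :: "'a set \<Rightarrow> ('a \<Rightarrow> 'a \<Rightarrow> bool) \<Rightarrow> 'a list \<Rightarrow> bool" where
  "is_cycle V E cs \<longleftrightarrow> length cs \<ge> 3 \<and> distinct cs \<and> set cs \<subseteq> V
     \<and> (\<forall>k < length cs. E (cs ! k) (cs ! ((k + 1) mod length cs)))"

definition has_chord :: "('a \<Rightarrow> 'a \<Rightarrow> bool) \<Rightarrow> 'a list \<Rightarrow> bool" where
  "has_chord E cs \<longleftrightarrow> (\<exists>j < length cs. \<exists>k < length cs. E (cs ! j) (cs ! k)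
     \<and> k \<noteq> (j + 1) mod length cs \<and> j \<noteq> (k + 1) mod length cs)"

definition chordal :: "'a set \<Rightarrow> ('a \<Rightarrow> 'a \<Rightarrow> bool) \<Rightarrow> bool" where
  "chordal V E \<longleftrightarrow> (\<forall>cs. is_cycle V E cs \<and> length cs \<ge> 4 \<longrightarrow> has_chord E cs)"

definition is_clique :: "'a set \<Rightarrow> ('a \<Rightarrow> 'a \<Rightarrow> bool) \<Rightarrow> 'a set \<Rightarrow> bool" where
  "is_clique V E K \<longleftrightarrow> K \<subseteq> V \<and> (\<forall>a\<in>K. \<forall>b\<in>K. a \<noteq> b \<longrightarrow> E a b)"

definition clique_number :: "'a set \<Rightarrow> ('a \<Rightarrow> 'a \<Rightarrow> bool) \<Rightarrow> nat" where
  "clique_number V E = Max {card K | K. is_clique V E K}"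

text \<open>The ordering v_1,...,v_n is the list ord (0-indexed: v_(i+1) = ord ! i).
  Out-neighbours: later neighbours in the ordering.\<close>
definition out_nbrs :: "('a \<Rightarrow> 'a \<Rightarrow> bool) \<Rightarrow> 'a list \<Rightarrow> 'a \<Rightarrow> 'a set" where
  "out_nbrs E ord y = {z. \<exists>i j. i < j \<and> j < length ord \<and> ord ! i = y \<and> ord ! j = z \<and> E y z}"

definition perfect_elim_ordering :: "'a set \<Rightarrow> ('a \<Rightarrow> 'a \<Rightarrow> bool) \<Rightarrow> 'a list \<Rightarrow> bool" where
  "perfect_elim_ordering V E ord \<longleftrightarrow> distinct ord \<and> set ord = V
     \<and> (\<forall>y \<in> V. is_clique V E (out_nbrs E ord y))"

definition proper_5col :: "'a set \<Rightarrow> ('a \<Rightarrow> 'a \<Rightarrow> bool) \<Rightarrow> ('a \<Rightarrow> nat) \<Rightarrow> bool" where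
  "proper_5col V E f \<longleftrightarrow> (\<forall>v\<in>V. f v < 5) \<and> (\<forall>a b. E a b \<longrightarrow> f a \<noteq> f b)"

definition apply_steps :: "('a \<Rightarrow> nat) \<Rightarrow> ('a \<times> nat) list \<Rightarrow> ('a \<Rightarrow> nat)" where
  "apply_steps f S = foldl (\<lambda>g (v, c). g(v := c)) f S"

definition recoloring_seq :: "'a set \<Rightarrow> ('a \<Rightarrow> 'a \<Rightarrow> bool) \<Rightarrow> ('a \<Rightarrow> nat) \<Rightarrow> ('a \<Rightarrow> nat)
    \<Rightarrow> ('a \<times> nat) list \<Rightarrow> bool" where
  "recoloring_seq V E \<alpha> \<beta> S \<longleftrightarrow> (\<forall>s \<in> set S. fst s \<in> V)
     \<and> (\<forall>k \<le> length S. proper_5col V E (apply_steps \<alpha> (take k S)))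
     \<and> (\<forall>v \<in> V. apply_steps \<alpha> S v = \<beta> v)"

text \<open>A colour b is valid for y at a step which changes the colouring g (of the
  already recoloured subgraph) into g': it is a colour and differs from the colours
  of the out-neighbours N of y just before and just after the step.\<close>
definition valid_col :: "'a set \<Rightarrow> ('a \<Rightarrow> nat) \<Rightarrow> ('a \<Rightarrow> nat) \<Rightarrow> nat \<Rightarrow> bool" where
  "valid_col N g g' b \<longleftrightarrow> b < 5 \<and> (\<forall>u\<in>N. b \<noteq> g u \<and> b \<noteq> g' u)"

text \<open>Best choice at a step: fc is the list of colours c_(t_j), t_j \<ge> t (future colours
  given to out-neighbours, starting with the current step); by0 is beta(y).
  The "latest appearing" colour is the one whose first occurrence in fc is latest.\<close>
definition best_choice :: "'a set \<Rightarrow> nat \<Rightarrow> ('a \<Rightarrow> nat) \<Rightarrow> ('a \<Rightarrow> nat) \<Rightarrow> nat list \<Rightarrow> nat \<Rightarrow> bool" where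
  "best_choice N by0 g g' fc b \<longleftrightarrow> valid_col N g g' b \<and>
     (if valid_col N g g' by0 \<and> by0 \<notin> set fc then b = by0
      else if (\<exists>b'. valid_col N g g' b' \<and> b' \<notin> set fc) then b \<notin> set fc
      else (\<forall>b'. valid_col N g g' b' \<longrightarrow>
               (LEAST k. k < length fc \<and> fc ! k = b') \<le> (LEAST k. k < length fc \<and> fc ! k = b)))"

text \<open>bc_ext N y by0 g a S' S: S is obtained by0 extending (the remaining part S' of) the
  best choice recolouring of G[V_(i+1)] to y, where g is the current colouring reached
  along S', a is the current colour of y, N = N^+(y), by0 = beta(y).\<close>
inductive bc_ext :: "'a set \<Rightarrow> 'a \<Rightarrow> nat \<Rightarrow> ('a \<Rightarrow> nat) \<Rightarrow> nat \<Rightarrow> ('a \<times> nat) list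
    \<Rightarrow> ('a \<times> nat) list \<Rightarrow> bool" where
  ext_end_same: "a = by0 \<Longrightarrow> bc_ext N y by0 g a [] []"
| ext_end_final: "a \<noteq> by0 \<Longrightarrow> bc_ext N y by0 g a [] [(y, by0)]"
| ext_conflict: "v \<in> N \<Longrightarrow> c = a \<Longrightarrow>
     best_choice N by0 g (g(v := c)) (map snd (filter (\<lambda>s. fst s \<in> N) ((v, c) # rest))) b \<Longrightarrow>
     bc_ext N y by0 (g(v := c)) b rest out \<Longrightarrow>
     bc_ext N y by0 g a ((v, c) # rest) ((y, b) # (v, c) # out)"
| ext_pass: "\<not> (v \<in> N \<and> c = a) \<Longrightarrow>
     bc_ext N y by0 (g(v := c)) a rest out \<Longrightarrow>
     bc_ext N y by0 g a ((v, c) # rest) ((v, c) # out)"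

text \<open>bcr V E ord alpha beta i S: S is a best choice recolouring of G[V_i] where
  V_i = set (drop i ord) (0-indexed). For i = length ord the graph is empty and S = [];
  the step from i+1 to i extends with y = ord ! i. (Extending the empty sequence
  to the last vertex is exactly "recolour v_n to beta(v_n) if needed".)\<close>
inductive bcr :: "'a set \<Rightarrow> ('a \<Rightarrow> 'a \<Rightarrow> bool) \<Rightarrow> 'a list \<Rightarrow> ('a \<Rightarrow> nat) \<Rightarrow> ('a \<Rightarrow> nat)
    \<Rightarrow> nat \<Rightarrow> ('a \<times> nat) list \<Rightarrow> bool" where
  bcr_empty: "bcr V E ord \<alpha> \<beta> (length ord) []"
| bcr_step: "bcr V E ord \<alpha> \<beta> (Suc i) S' \<Longrightarrow> i < length ord \<Longrightarrow>
     bc_ext (out_nbrs E ord (ord ! i)) (ord ! i) (\<beta> (ord ! i)) \<alpha> (\<alpha> (ord ! i)) S' S \<Longrightarrow>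
     bcr V E ord \<alpha> \<beta> i S"

definition best_choice_recoloring :: "'a set \<Rightarrow> ('a \<Rightarrow> 'a \<Rightarrow> bool) \<Rightarrow> 'a list \<Rightarrow> ('a \<Rightarrow> nat)
    \<Rightarrow> ('a \<Rightarrow> nat) \<Rightarrow> ('a \<times> nat) list \<Rightarrow> bool" where
  "best_choice_recoloring V E ord \<alpha> \<beta> S \<longleftrightarrow>
     recoloring_seq V E \<alpha> \<beta> S \<and> bcr V E ord \<alpha> \<beta> 0 S"

definition restrict_seq :: "('a \<times> nat) list \<Rightarrow> 'a set \<Rightarrow> ('a \<times> nat) list" where
  "restrict_seq S X = filter (\<lambda>s. fst s \<in> X) S"

definition colors_of :: "('a \<times> nat) list \<Rightarrow> 'a \<Rightarrow> nat list" where
  "colors_of S v = map snd (restrict_seq S {v})"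

definition num_recol :: "('a \<times> nat) list \<Rightarrow> 'a \<Rightarrow> nat" where
  "num_recol S v = length (colors_of S v)"

definition pattern_count :: "('a \<times> nat) list \<Rightarrow> 'a \<Rightarrow> 'a \<Rightarrow> 'a \<Rightarrow> nat" where
  "pattern_count T u w v = card {j. j + 3 < length T \<and> fst (T ! j) = u \<and>
     fst (T ! (j + 1)) = w \<and> fst (T ! (j + 2)) = v \<and> fst (T ! (j + 3)) = u}"

definition bad_triples :: "nat list \<Rightarrow> nat" where
  "bad_triples L = card {j. j + 2 < length L \<and>
     \<not> (L ! j \<noteq> L ! (j + 1) \<and> L ! j \<noteq> L ! (j + 2) \<and> L ! (j + 1) \<noteq> L ! (j + 2))}"

end

theory Submission
  imports Defs
begin

(*
  Fix a vertex y with out-neighbourhood N. Seen from N \<union> {y}, the extension of the best choice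
  recolouring to y is determined by its steps on N: y is recoloured just before the steps giving
  an out-neighbour the current colour of y (conflicts), and possibly once at the end. With at most two out-neighbours
  and five colours a best choice is never the colour given by the next step on N, and with a
  single out-neighbour not that of either of the next two steps. Potential functions along these
  traces yield, with h the number of times v takes over the colour u has just left,
    2 |S_x| + h \<le> |S_u| + |S_v| + 3,
    4 |S_u| \<le> 6 + 2 h + |S_v| + 2 |S_w| + #(u w v u),
    bad(x) + 2 |S_x| + 2 #(u v u) \<le> 2 |S_u| + 2 |S_v| + 5,
  and 3 |S_u| \<le> |S_v| + 5 when v = w. As |S_u|, |S_v|, |S_w| \<le> c \<le> |S_x| + 1, both claims
  follow by linear arithmetic.
*)

section \<open>Counting along recolouring sequences\<close>

lemma card_Collect_nat_shift:
  assumes "finite {j. P j}"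
  shows "card {j. P j} = (if P 0 then 1 else 0) + card {j. P (Suc j)}"
proof -
  have split: "{j. P j} = (if P 0 then {0} else {}) \<union> Suc ` {j. P (Suc j)}"
  proof (rule set_eqI)
    show "j \<in> {j. P j} \<longleftrightarrow> j \<in> (if P 0 then {0} else {}) \<union> Suc ` {j. P (Suc j)}" for j
      by (cases j) auto
  qed
  have "finite {j. P (Suc j)}"
    using finite_vimageI[OF assms inj_Suc] by (simp add: vimage_def)
  then show ?thesis
    unfolding split by (subst card_Un_disjoint) (auto simp: card_image)
qed

lemma pattern_count_Nil [simp]: "pattern_count [] u w v = 0"
  by (simp add: pattern_count_def)

lemma pattern_count_Cons [simp]:
  "pattern_count (s # L) u w v =
     (if 3 \<le> length L \<and> fst s = u \<and> fst (L ! 0) = w \<and> fst (L ! 1) = v \<and> fst (L ! 2) = u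
      then 1 else 0) + pattern_count L u w v"
proof -
  have "finite {j. j + 3 < length (s # L) \<and> fst ((s # L) ! j) = u \<and> fst ((s # L) ! (j + 1)) = w
      \<and> fst ((s # L) ! (j + 2)) = v \<and> fst ((s # L) ! (j + 3)) = u}"
    by (rule finite_subset[of _ "{..<length (s # L)}"]) auto
  then show ?thesis
    unfolding pattern_count_def by (subst card_Collect_nat_shift) (simp_all add: numeral_eq_Suc)
qed

lemma bad_triples_Nil [simp]: "bad_triples [] = 0"
  by (simp add: bad_triples_def)

lemma bad_triples_Cons [simp]:
  "bad_triples (c # L) =
     (if 2 \<le> length L \<and> \<not> distinct [c, L ! 0, L ! 1] then 1 else 0) + bad_triples L"
proof -
  have "finite {j. j + 2 < length (c # L) \<and> \<not> ((c # L) ! j \<noteq> (c # L) ! (j + 1)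
      \<and> (c # L) ! j \<noteq> (c # L) ! (j + 2) \<and> (c # L) ! (j + 1) \<noteq> (c # L) ! (j + 2))}"
    by (rule finite_subset[of _ "{..<length (c # L)}"]) auto
  then show ?thesis
    unfolding bad_triples_def by (subst card_Collect_nat_shift) (auto simp: numeral_eq_Suc)
qed

lemma bad_triples_le_length: "bad_triples L \<le> length L"
  by (induction L) auto

lemma num_recol_Nil [simp]: "num_recol [] y = 0"
  by (simp add: num_recol_def colors_of_def restrict_seq_def)

lemma num_recol_Cons [simp]:
  "num_recol (s # L) y = (if fst s = y then 1 else 0) + num_recol L y"
  by (simp add: num_recol_def colors_of_def restrict_seq_def)

lemma colors_of_Nil [simp]: "colors_of [] y = []"
  by (simp add: colors_of_def restrict_seq_def)

lemma colors_of_Cons [simp]: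
  "colors_of (s # L) y = (if fst s = y then snd s # colors_of L y else colors_of L y)"
  by (simp add: colors_of_def restrict_seq_def)

lemma restrict_seq_restrict_seq: "N \<subseteq> X \<Longrightarrow> restrict_seq (restrict_seq L X) N = restrict_seq L N"
  unfolding restrict_seq_def by (induction L) auto

lemma colors_of_restrict_seq: "y \<in> X \<Longrightarrow> colors_of (restrict_seq S X) y = colors_of S y"
  unfolding restrict_seq_def by (induction S) auto

lemma num_recol_restrict_seq: "y \<in> X \<Longrightarrow> num_recol (restrict_seq S X) y = num_recol S y"
  by (simp add: num_recol_def colors_of_restrict_seq)

lemma length_restrict_seq_singleton: "length (restrict_seq S {v}) = num_recol S v"
  by (simp add: num_recol_def colors_of_def)

lemma length_restrict_seq_pair:
  "u \<noteq> v \<Longrightarrow> length (restrict_seq S {u, v}) = num_recol S u + num_recol S v"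
  unfolding restrict_seq_def by (induction S) auto

text \<open>Steps (u, _), (v, c) in a row, where c is the colour u had before its step: v takes
  over the colour u has just left. The argument cu is the current colour of u.\<close>
fun handover_count :: "'a \<Rightarrow> 'a \<Rightarrow> nat \<Rightarrow> ('a \<times> nat) list \<Rightarrow> nat" where
  "handover_count u v cu [] = 0"
| "handover_count u v cu (s # L) = (if L \<noteq> [] \<and> fst s = u \<and> hd L = (v, cu) then 1 else 0)
     + handover_count u v (if fst s = u then snd s else cu) L"

fun return_count :: "'a \<Rightarrow> 'a \<Rightarrow> ('a \<times> nat) list \<Rightarrow> nat" where
  "return_count u v [] = 0"
| "return_count u v (s # L) =
     (if 2 \<le> length L \<and> fst s = u \<and> fst (L ! 0) = v \<and> fst (L ! 1) = u then 1 else 0)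
     + return_count u v L"

text \<open>Consecutive steps recolouring the same vertex; l is the vertex of the step before the list.\<close>
fun repeat_count :: "'a option \<Rightarrow> ('a \<times> nat) list \<Rightarrow> nat" where
  "repeat_count l [] = 0"
| "repeat_count l (s # L) = (if l = Some (fst s) then 1 else 0) + repeat_count (Some (fst s)) L"

definition closes_bad_triple :: "nat option \<Rightarrow> nat option \<Rightarrow> nat \<Rightarrow> bool" where
  "closes_bad_triple p q c \<longleftrightarrow>
     (case (p, q) of (Some p', Some q') \<Rightarrow> \<not> distinct [p', q', c] | _ \<Rightarrow> False)"

text \<open>Bad triples ending inside L, where p, q are the (at most two) entries preceding L.\<close>
fun bad_triples_after :: "nat option \<Rightarrow> nat option \<Rightarrow> nat list \<Rightarrow> nat" where
  "bad_triples_after p q [] = 0"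
| "bad_triples_after p q (c # L) =
     (if closes_bad_triple p q c then 1 else 0) + bad_triples_after q (Some c) L"

lemma bad_triples_after_Some: "bad_triples_after (Some a) (Some b) L = bad_triples (a # b # L)"
  by (induction L arbitrary: a b) (auto simp: closes_bad_triple_def)

lemma bad_triples_after_None: "bad_triples_after None None L = bad_triples L"
  by (cases L rule: remdups_adj.cases)
    (auto simp: closes_bad_triple_def bad_triples_after_Some)

lemma bad_triples_after_le_length: "bad_triples_after p q L \<le> length L"
proof (induction L arbitrary: p q)
  case (Cons c L)
  have "bad_triples_after q (Some c) L \<le> length L" by (rule Cons.IH)
  then show ?case by simp
qed simp

lemma handover_count_le_restrict_seq:
  "handover_count u v cu R \<le> handover_count u v cu (restrict_seq R {u, v})"
proof (induction R arbitrary: cu)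
  case (Cons s R)
  show ?case
  proof (cases "fst s \<in> {u, v}")
    case True
    have "(if R \<noteq> [] \<and> fst s = u \<and> hd R = (v, cu) then 1 else 0)
        \<le> (if restrict_seq R {u, v} \<noteq> [] \<and> fst s = u \<and> hd (restrict_seq R {u, v}) = (v, cu)
           then 1 else (0::nat))"
      by (cases R) (auto simp: restrict_seq_def)
    then show ?thesis
      using True Cons.IH[of "if fst s = u then snd s else cu"] by (simp add: restrict_seq_def)
  next
    case False
    then show ?thesis
      using Cons.IH[of cu] by (cases R) (auto simp: restrict_seq_def)
  qed
qed simp

lemma pattern_count_le_return_count:
  assumes "u \<noteq> w" "v \<noteq> w"
  shows "pattern_count R u w v \<le> return_count u v (restrict_seq R {u, v})"
proof (induction R)
  case (Cons s R)
  have "return_count u v (restrict_seq (s # R) {u, v}) \<ge> 1 + return_count u v (restrict_seq R {u, v})"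
    if "3 \<le> length R" "fst s = u" "fst (R ! 0) = w" "fst (R ! 1) = v" "fst (R ! 2) = u"
  proof -
    obtain r0 r1 r2 R' where R: "R = r0 # r1 # r2 # R'"
      using \<open>3 \<le> length R\<close> by (metis Suc_le_length_iff numeral_3_eq_3)
    then show ?thesis
      using that assms by (simp add: restrict_seq_def)
  qed
  moreover have "return_count u v (restrict_seq R {u, v}) \<le> return_count u v (restrict_seq (s # R) {u, v})"
    by (simp add: restrict_seq_def)
  ultimately show ?case
    using Cons.IH by (auto split: if_splits)
qed simp

lemma repeat_count_return_count_le_length:
  assumes "u \<noteq> v"
  shows "repeat_count l T + 2 * return_count u v T \<le> length T"
proof -
  have "repeat_count l T + 2 * return_count u v T
      + (if T \<noteq> [] \<and> l \<noteq> Some (fst (hd T)) then 1 else 0) \<le> length T" for l T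
  proof (induction T arbitrary: l rule: length_induct)
    case (1 T)
    show ?case
    proof (cases T)
      case (Cons s L)
      show ?thesis
      proof (cases "2 \<le> length L \<and> fst s = u \<and> fst (L ! 0) = v \<and> fst (L ! 1) = u")
        case True
        then obtain s1 s2 L' where L: "L = s1 # s2 # L'"
          by (metis Suc_le_length_iff numeral_2_eq_2)
        have "repeat_count (Some v) (s2 # L') + 2 * return_count u v (s2 # L') + 1 \<le> length (s2 # L')"
          using "1"[rule_format, of "s2 # L'" "Some v"] True L assms Cons by auto
        then show ?thesis using True L Cons assms by auto
      next
        case False
        then show ?thesis using "1"[rule_format, of L "Some (fst s)"] Cons by auto
      qed
    qed simp
  qed
  then show ?thesis by (metis add_leD1)
qed

section \<open>The trace of an extension on a closed out-neighbourhood\<close>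

text \<open>The part of an extension (bc_ext) visible from N \<union> {y}: T is the subsequence of S'
  recolouring N, Y the subsequence of S recolouring N \<union> {y}; of the current colouring only
  its restriction h to N matters.\<close>
inductive trace_ext :: "'a set \<Rightarrow> 'a \<Rightarrow> nat \<Rightarrow> ('a \<Rightarrow> nat) \<Rightarrow> nat \<Rightarrow> ('a \<times> nat) list
    \<Rightarrow> ('a \<times> nat) list \<Rightarrow> bool" for N y \<beta>y where
  trace_end_same: "a = \<beta>y \<Longrightarrow> trace_ext N y \<beta>y h a [] []"
| trace_end_final: "a \<noteq> \<beta>y \<Longrightarrow> trace_ext N y \<beta>y h a [] [(y, \<beta>y)]"
| trace_conflict: "z \<in> N \<Longrightarrow> best_choice N \<beta>y h (h(z := a)) (a # map snd T) b \<Longrightarrow>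
     trace_ext N y \<beta>y (h(z := a)) b T Y \<Longrightarrow>
     trace_ext N y \<beta>y h a ((z, a) # T) ((y, b) # (z, a) # Y)"
| trace_pass: "z \<in> N \<Longrightarrow> c \<noteq> a \<Longrightarrow> trace_ext N y \<beta>y (h(z := c)) a T Y \<Longrightarrow>
     trace_ext N y \<beta>y h a ((z, c) # T) ((z, c) # Y)"

lemma best_choice_cong:
  assumes "\<forall>n\<in>N. g1 n = g2 n" "\<forall>n\<in>N. g1' n = g2' n"
  shows "best_choice N \<beta>y g1 g1' fc b = best_choice N \<beta>y g2 g2' fc b"
proof -
  have valid: "valid_col N g1 g1' = valid_col N g2 g2'"
    using assms by (auto simp: valid_col_def fun_eq_iff)
  show ?thesis unfolding best_choice_def valid ..
qed

lemma restrict_seq_bc_ext: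
  "bc_ext N y \<beta>y g a S' S \<Longrightarrow> y \<notin> X \<Longrightarrow> restrict_seq S X = restrict_seq S' X"
  unfolding restrict_seq_def by (induction rule: bc_ext.induct) auto

lemma bc_ext_steps: "bc_ext N y \<beta>y g a S' S \<Longrightarrow> s \<in> set S \<Longrightarrow> s \<in> set S' \<or> fst s = y"
  by (induction arbitrary: s rule: bc_ext.induct) auto

lemma bc_ext_trace_ext:
  assumes "bc_ext N y \<beta>y g a S' S" "y \<notin> N" "y \<notin> fst ` set S'" "\<forall>n\<in>N. h n = g n"
  shows "trace_ext N y \<beta>y h a (restrict_seq S' N) (restrict_seq S (insert y N))"
  using assms
proof (induction arbitrary: h rule: bc_ext.induct)
  case (ext_conflict v N c a \<beta>y g rest b y out)
  have "best_choice N \<beta>y h (h(v := a)) (a # map snd (restrict_seq rest N)) b"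
    using ext_conflict.hyps(1-3) ext_conflict.prems(3)
      best_choice_cong[of N h g "h(v := a)" "g(v := a)"] by (simp add: restrict_seq_def)
  moreover have "trace_ext N y \<beta>y (h(v := a)) b (restrict_seq rest N) (restrict_seq out (insert y N))"
    using ext_conflict.IH ext_conflict.prems ext_conflict.hyps(2) by simp
  ultimately show ?case
    using trace_conflict ext_conflict.hyps(1,2) by (fastforce simp: restrict_seq_def)
next
  case (ext_pass v N c a y \<beta>y g rest out)
  have IH: "trace_ext N y \<beta>y h' a (restrict_seq rest N) (restrict_seq out (insert y N))"
    if "\<forall>n\<in>N. h' n = (g(v := c)) n" for h'
    using ext_pass.IH ext_pass.prems(1,2) that by simp
  show ?case
  proof (cases "v \<in> N")
    case True
    then show ?thesis
      using trace_pass[OF True _ IH[of "h(v := c)"]] ext_pass.hyps(1) ext_pass.prems(3)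
      by (simp add: restrict_seq_def)
  next
    case False
    then show ?thesis
      using IH[of h] ext_pass.prems by (auto simp: restrict_seq_def)
  qed
qed (auto simp: restrict_seq_def intro: trace_ext.intros)

lemma bcr_steps_later:
  "bcr V E ord \<alpha> \<beta> j S \<Longrightarrow> s \<in> set S \<Longrightarrow> \<exists>k. j \<le> k \<and> k < length ord \<and> fst s = ord ! k"
proof (induction arbitrary: s rule: bcr.induct)
  case (bcr_step V E ord \<alpha> \<beta> i S' S)
  from bc_ext_steps[OF bcr_step.hyps(3) bcr_step.prems] show ?case
    using bcr_step.IH bcr_step.hyps(2) Suc_leD by blast
qed simp

lemma bcr_stage:
  assumes "bcr V E ord \<alpha> \<beta> j S" "j \<le> iy" "iy < length ord" "\<forall>k. j \<le> k \<longrightarrow> k < iy \<longrightarrow> ord ! k \<notin> X"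
  shows "\<exists>S1 S0. bcr V E ord \<alpha> \<beta> (Suc iy) S1 \<and>
     bc_ext (out_nbrs E ord (ord ! iy)) (ord ! iy) (\<beta> (ord ! iy)) \<alpha> (\<alpha> (ord ! iy)) S1 S0 \<and>
     restrict_seq S X = restrict_seq S0 X"
  using assms
proof (induction rule: bcr.induct)
  case (bcr_step V E ord \<alpha> \<beta> i S' S)
  show ?case
  proof (cases "iy = i")
    case False
    then have "restrict_seq S X = restrict_seq S' X"
      using restrict_seq_bc_ext[OF bcr_step.hyps(3)] bcr_step.prems by simp
    then show ?thesis using bcr_step False by auto
  qed (use bcr_step in blast)
qed simp

lemma out_nbr_later:
  assumes "distinct ord" "i < length ord" "n \<in> out_nbrs E ord (ord ! i)"
  shows "\<exists>j. i < j \<and> j < length ord \<and> ord ! j = n \<and> E (ord ! i) n"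
  using assms nth_eq_iff_index_eq unfolding out_nbrs_def by fastforce

lemma not_in_out_nbrs:
  assumes "distinct ord" "i < length ord" "k \<le> i"
  shows "ord ! k \<notin> out_nbrs E ord (ord ! i)"
proof
  assume "ord ! k \<in> out_nbrs E ord (ord ! i)"
  then obtain j where "i < j" "j < length ord" "ord ! j = ord ! k"
    using out_nbr_later[OF assms(1,2)] by blast
  then show False using assms by (simp add: nth_eq_iff_index_eq)
qed

lemma bcr_trace_ext:
  assumes bcr: "bcr V E ord \<alpha> \<beta> 0 S" and "distinct ord" "iy < length ord"
  defines "y \<equiv> ord ! iy" and "N \<equiv> out_nbrs E ord (ord ! iy)"
  shows "trace_ext N y (\<beta> y) \<alpha> (\<alpha> y) (restrict_seq S N) (restrict_seq S (insert y N))"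
proof -
  have yN: "y \<notin> N"
    unfolding y_def N_def using not_in_out_nbrs assms(2,3) by blast
  have "ord ! k \<notin> insert y N" if "k < iy" for k
    using that not_in_out_nbrs[OF assms(2,3), of k E] assms(2,3)
    by (simp add: y_def N_def nth_eq_iff_index_eq)
  then obtain S1 S0 where S1: "bcr V E ord \<alpha> \<beta> (Suc iy) S1"
      and S0: "bc_ext N y (\<beta> y) \<alpha> (\<alpha> y) S1 S0"
      and restr: "restrict_seq S (insert y N) = restrict_seq S0 (insert y N)"
    using bcr_stage[OF bcr _ \<open>iy < length ord\<close>] unfolding N_def y_def by blast
  have "y \<notin> fst ` set S1"
  proof
    assume "y \<in> fst ` set S1"
    then obtain s where "s \<in> set S1" "fst s = y" by blast
    then obtain k where "Suc iy \<le> k" "k < length ord" "ord ! k = ord ! iy"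
      using bcr_steps_later[OF S1] unfolding y_def by metis
    then show False using assms(2,3) by (simp add: nth_eq_iff_index_eq)
  qed
  then have "trace_ext N y (\<beta> y) \<alpha> (\<alpha> y) (restrict_seq S1 N) (restrict_seq S0 (insert y N))"
    using bc_ext_trace_ext[OF S0 yN] by blast
  moreover have "restrict_seq S N = restrict_seq S1 N"
    by (metis restr restrict_seq_restrict_seq restrict_seq_bc_ext[OF S0 yN] subset_insertI)
  ultimately show ?thesis using restr by simp
qed

section \<open>Consequences of the best choice rule\<close>

lemma best_choice_valid: "best_choice N \<beta>y g g' fc b \<Longrightarrow> valid_col N g g' b"
  by (simp add: best_choice_def)

lemma best_choice_reused_colour:
  assumes bc: "best_choice N \<beta>y h (h(z := a)) (a # map snd T) b" and "z \<in> N"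
    and "j < length T" "snd (T ! j) = b"
    and e: "valid_col N h (h(z := a)) e" "e \<noteq> b"
  shows "e \<in> snd ` set (take j T)"
proof -
  define fc where "fc = a # map snd T"
  define first where "first c = (LEAST k. k < length fc \<and> fc ! k = c)" for c
  have b_fc: "Suc j < length fc" "fc ! Suc j = b"
    using assms(3,4) by (simp_all add: fc_def)
  then have "b \<in> set fc" by (metis nth_mem)
  \<comment> \<open>so b was chosen by the last clause of best_choice\<close>
  then have "(\<forall>c. valid_col N h (h(z := a)) c \<longrightarrow> c \<in> set fc) \<and>
      (\<forall>c. valid_col N h (h(z := a)) c \<longrightarrow> first c \<le> first b)"
    using bc unfolding best_choice_def first_def fc_def by (auto split: if_splits)
  then have "e \<in> set fc" and e_first: "first e \<le> first b"
    using e(1) by auto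
  have first_at: "first c < length fc \<and> fc ! first c = c" if "c \<in> set fc" for c
    unfolding first_def by (rule LeastI_ex) (use that in \<open>simp add: in_set_conv_nth\<close>)
  have "first b \<le> Suc j"
    unfolding first_def using b_fc by (intro Least_le) simp
  moreover have "first e \<noteq> first b"
    using first_at \<open>e \<in> set fc\<close> \<open>b \<in> set fc\<close> e(2) by metis
  moreover have "first e \<noteq> 0"
  proof
    assume "first e = 0"
    then have "e = a" using first_at[OF \<open>e \<in> set fc\<close>] by (simp add: fc_def)
    then show False using e(1) \<open>z \<in> N\<close> by (auto simp: valid_col_def)
  qed
  ultimately obtain k where "first e = Suc k" "k < j"
    using e_first by (cases "first e") auto
  then show ?thesis
    using first_at[OF \<open>e \<in> set fc\<close>] assms(3) by (force simp: fc_def in_set_conv_nth)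
qed

lemma ex_colour_not_in:
  fixes cs :: "nat list"
  assumes "length cs < 5"
  shows "\<exists>e<5. e \<notin> set cs"
proof (rule ccontr)
  assume "\<not> ?thesis"
  then have "{..<5} \<subseteq> set cs" by auto
  then have "card {..<5::nat} \<le> length cs"
    using card_mono[of "set cs"] card_length[of cs] by (meson List.finite_set le_trans)
  then show False using assms by simp
qed

lemma best_choice_next_two_nbrs:
  assumes "best_choice N \<beta>y h (h(z := a)) (a # map snd T) b" "z \<in> N" "N \<subseteq> {n1, n2}" "T \<noteq> []"
  shows "snd (hd T) \<noteq> b"
proof
  assume "snd (hd T) = b"
  obtain e where "e < 5" "e \<notin> set [h n1, h n2, a, b]"
    using ex_colour_not_in[of "[h n1, h n2, a, b]"] by auto
  then have "valid_col N h (h(z := a)) e" "e \<noteq> b"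
    using assms(3) by (auto simp: valid_col_def)
  with best_choice_reused_colour[OF assms(1,2), of 0] assms(4) \<open>snd (hd T) = b\<close>
  show False by (simp add: hd_conv_nth)
qed

lemma best_choice_second_two_nbrs:
  assumes "best_choice N \<beta>y h (h(z := a)) (a # map snd T) b" "z \<in> N" "N \<subseteq> {n1, n2}"
    and "2 \<le> length T" "snd (T ! 0) = h n" "n \<in> N"
  shows "snd (T ! 1) \<noteq> b"
proof
  assume "snd (T ! 1) = b"
  obtain e where "e < 5" "e \<notin> set [h n1, h n2, a, b]"
    using ex_colour_not_in[of "[h n1, h n2, a, b]"] by auto
  then have valid: "valid_col N h (h(z := a)) e" and "e \<noteq> b"
    using assms(3) by (auto simp: valid_col_def)
  then have "e \<in> snd ` set (take 1 T)"
    using best_choice_reused_colour[OF assms(1,2)] assms(4) \<open>snd (T ! 1) = b\<close> by simp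
  moreover have "take 1 T = [T ! 0]"
    using assms(4) by (cases T) auto
  ultimately show False
    using valid assms(5,6) by (auto simp: valid_col_def)
qed

lemma best_choice_next_one_nbr:
  assumes "best_choice {n} \<beta>y h (h(n := a)) (a # map snd T) b" "j < length T" "j < 2"
  shows "snd (T ! j) \<noteq> b"
proof
  assume "snd (T ! j) = b"
  obtain e1 where e1: "e1 < 5" "e1 \<notin> set [h n, a, b]"
    using ex_colour_not_in[of "[h n, a, b]"] by auto
  obtain e2 where e2: "e2 < 5" "e2 \<notin> set [e1, h n, a, b]"
    using ex_colour_not_in[of "[e1, h n, a, b]"] by auto
  have "e \<in> snd ` set (take j T)" if "e \<in> {e1, e2}" for e
    using best_choice_reused_colour[OF assms(1) _ assms(2) \<open>snd (T ! j) = b\<close>] that e1 e2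
    by (auto simp: valid_col_def)
  moreover have "set (take j T) \<subseteq> {T ! 0}"
    using assms(3) by (cases T; cases j) auto
  ultimately have "e1 = snd (T ! 0)" "e2 = snd (T ! 0)"
    by blast+
  then show False
    using e2 by simp
qed

section \<open>Potentials along traces\<close>

definition recolour_potential :: "'a \<Rightarrow> 'a \<Rightarrow> 'a \<Rightarrow> nat \<Rightarrow> ('a \<times> nat) list \<Rightarrow> ('a \<times> nat) list \<Rightarrow> int" where
  "recolour_potential u v y cu T Y =
     int (handover_count u v cu T) + 2 * int (num_recol Y y) - int (length T)"

text \<open>The step of T after a conflict is a pass, and so is the one after it if the pass is a
  handover from u to v.\<close>
lemma trace_ext_recolour_potential:
  assumes "trace_ext N y \<beta>y h a T Y" "N = {u, v}" "u \<noteq> v" "y \<notin> N" "\<forall>n\<in>N. h n \<noteq> a"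
  shows "recolour_potential u v y (h u) T Y \<le> 3
   \<and> ((T = [] \<or> snd (hd T) \<noteq> a) \<longrightarrow> recolour_potential u v y (h u) T Y \<le> 2)
   \<and> ((T \<noteq> [] \<and> fst (hd T) = v \<and> snd (hd T) \<noteq> a \<and> (2 \<le> length T \<longrightarrow> snd (T ! 1) \<noteq> a))
        \<longrightarrow> recolour_potential u v y (h u) T Y \<le> 1)"
  using assms
proof (induction rule: trace_ext.induct)
  case (trace_conflict z h a T b Y)
  let ?\<Phi> = "recolour_potential u v y"
  have valid: "valid_col N h (h(z := a)) b"
    using best_choice_valid[OF trace_conflict.hyps(2)] .
  then have IH: "?\<Phi> ((h(z := a)) u) T Y \<le> 3"
    "T = [] \<or> snd (hd T) \<noteq> b \<Longrightarrow> ?\<Phi> ((h(z := a)) u) T Y \<le> 2"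
    "T \<noteq> [] \<and> fst (hd T) = v \<and> snd (hd T) \<noteq> b \<and> (2 \<le> length T \<longrightarrow> snd (T ! 1) \<noteq> b)
       \<Longrightarrow> ?\<Phi> ((h(z := a)) u) T Y \<le> 1"
    using trace_conflict.IH trace_conflict.prems by (auto simp: valid_col_def)
  have next_not_b: "T = [] \<or> snd (hd T) \<noteq> b"
    using best_choice_next_two_nbrs[OF trace_conflict.hyps(2,1)] trace_conflict.prems(1) by blast
  have "z \<noteq> y" using trace_conflict.hyps(1) trace_conflict.prems by auto
  then have step: "?\<Phi> (h u) ((z, a) # T) ((y, b) # (z, a) # Y)
      = (if z = u \<and> T \<noteq> [] \<and> hd T = (v, h u) then 1 else 0) + 1 + ?\<Phi> ((h(z := a)) u) T Y"
    by (auto simp: recolour_potential_def)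
  have "?\<Phi> (h u) ((z, a) # T) ((y, b) # (z, a) # Y) \<le> 3"
  proof (cases "z = u \<and> T \<noteq> [] \<and> hd T = (v, h u)")
    case True
    have "2 \<le> length T \<longrightarrow> snd (T ! 1) \<noteq> b"
      using best_choice_second_two_nbrs[OF trace_conflict.hyps(2,1), of u v u] True
        trace_conflict.prems(1) by (auto simp: hd_conv_nth)
    moreover have "h u \<noteq> b"
      using valid trace_conflict.prems(1) by (auto simp: valid_col_def)
    ultimately show ?thesis
      using IH(3) True step by simp
  next
    case False
    then show ?thesis using IH(2)[OF next_not_b] step by auto
  qed
  then show ?case by simp
next
  case (trace_pass z c a h T Y)
  let ?\<Phi> = "recolour_potential u v y"
  have IH: "?\<Phi> ((h(z := c)) u) T Y \<le> 3"
    "T = [] \<or> snd (hd T) \<noteq> a \<Longrightarrow> ?\<Phi> ((h(z := c)) u) T Y \<le> 2"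
    using trace_pass.IH trace_pass.prems trace_pass.hyps(2) by auto
  define \<delta> where "\<delta> = (if z = u \<and> T \<noteq> [] \<and> hd T = (v, h u) then 1 else (0::int))"
  have "z \<noteq> y" using trace_pass.hyps(1) trace_pass.prems by auto
  then have step: "?\<Phi> (h u) ((z, c) # T) ((z, c) # Y) = \<delta> - 1 + ?\<Phi> ((h(z := c)) u) T Y"
    by (auto simp: recolour_potential_def \<delta>_def)
  have "\<delta> = 1 \<Longrightarrow> snd (hd T) \<noteq> a"
    using trace_pass.prems(1,4) by (auto simp: \<delta>_def split: if_splits)
  then have "?\<Phi> (h u) ((z, c) # T) ((z, c) # Y) \<le> 2"
    using IH step by (cases "\<delta> = 1") (auto simp: \<delta>_def split: if_splits)
  moreover have "?\<Phi> (h u) ((z, c) # T) ((z, c) # Y) \<le> 1"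
    if "z = v" "2 \<le> length ((z, c) # T) \<longrightarrow> snd (((z, c) # T) ! 1) \<noteq> a"
  proof -
    have "\<delta> = 0" using that(1) trace_pass.prems(2) by (simp add: \<delta>_def)
    moreover have "T = [] \<or> snd (hd T) \<noteq> a" using that(2) by (cases T) auto
    ultimately show ?thesis using IH(2) step by simp
  qed
  ultimately show ?case by simp
qed (simp_all add: recolour_potential_def)

lemma trace_ext_pass_then_conflict:
  assumes "trace_ext N y \<beta>y h a ((z1, c1) # (z2, a) # T) R" "c1 \<noteq> a"
  shows "3 \<le> length R \<and> R ! 0 = (z1, c1) \<and> fst (R ! 1) = y"
proof -
  from assms(1,2) obtain R1 where "R = (z1, c1) # R1"
    and "trace_ext N y \<beta>y (h(z1 := c1)) a ((z2, a) # T) R1"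
    by (cases rule: trace_ext.cases) auto
  moreover from this(2) obtain b R2 where "R1 = (y, b) # (z2, a) # R2"
    by (cases rule: trace_ext.cases) auto
  ultimately show ?thesis by simp
qed

definition pattern_potential :: "'a \<Rightarrow> 'a \<Rightarrow> 'a \<Rightarrow> nat \<Rightarrow> ('a \<times> nat) list \<Rightarrow> ('a \<times> nat) list \<Rightarrow> int" where
  "pattern_potential u v w a T R = 4 * int (num_recol R u) - 2 * int (handover_count u v a R)
     - int (num_recol T v) - 2 * int (num_recol T w) - int (pattern_count R u w v)"

text \<open>A conflict of w followed by a pass of v and another conflict creates the pattern u w v u.\<close>
lemma trace_ext_pattern_potential:
  assumes "trace_ext N u \<beta>u h a T R" "N = {v, w}" "v \<noteq> w" "u \<notin> N" "\<forall>n\<in>N. h n \<noteq> a"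
  shows "pattern_potential u v w a T R \<le> 6
   \<and> ((T = [] \<or> snd (hd T) \<noteq> a) \<longrightarrow> pattern_potential u v w a T R \<le> 5)
   \<and> ((T = [] \<or> (snd (hd T) \<noteq> a \<and> \<not> (fst (hd T) = v \<and> 2 \<le> length T \<and> snd (T ! 1) = a)))
        \<longrightarrow> pattern_potential u v w a T R \<le> 4)"
  using assms
proof (induction rule: trace_ext.induct)
  case (trace_conflict z h a T b R)
  let ?\<Phi> = "pattern_potential u v w"
  have "valid_col N h (h(z := a)) b"
    using best_choice_valid[OF trace_conflict.hyps(2)] .
  then have IH: "T = [] \<or> snd (hd T) \<noteq> b \<Longrightarrow> ?\<Phi> b T R \<le> 5"
    "T = [] \<or> (snd (hd T) \<noteq> b \<and> \<not> (fst (hd T) = v \<and> 2 \<le> length T \<and> snd (T ! 1) = b))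
       \<Longrightarrow> ?\<Phi> b T R \<le> 4"
    using trace_conflict.IH trace_conflict.prems by (auto simp: valid_col_def)
  have next_not_b: "T = [] \<or> snd (hd T) \<noteq> b"
    using best_choice_next_two_nbrs[OF trace_conflict.hyps(2,1)] trace_conflict.prems(1) by blast
  have "z \<noteq> u" "z = v \<or> z = w"
    using trace_conflict.hyps(1) trace_conflict.prems(1,3) by auto
  have "?\<Phi> a ((z, a) # T) ((u, b) # (z, a) # R) \<le> 6"
  proof (cases "z = w \<and> T \<noteq> [] \<and> fst (hd T) = v \<and> 2 \<le> length T \<and> snd (T ! 1) = b")
    case True
    then obtain c1 z2 T' where T: "T = (v, c1) # (z2, b) # T'"
      by (cases T rule: remdups_adj.cases) auto
    have "c1 \<noteq> b"
      using next_not_b T by simp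
    then have "3 \<le> length R \<and> R ! 0 = (v, c1) \<and> fst (R ! 1) = u"
      using trace_ext_pass_then_conflict[OF trace_conflict.hyps(3)[unfolded T]] by blast
    then show ?thesis
      using True IH(1)[OF next_not_b] \<open>z \<noteq> u\<close> trace_conflict.prems(2)
      by (simp add: pattern_potential_def)
  next
    case False
    then have "z = v \<or> ?\<Phi> b T R \<le> 4"
      using IH(2) next_not_b \<open>z = v \<or> z = w\<close> by blast
    then show ?thesis
      using IH(1)[OF next_not_b] \<open>z \<noteq> u\<close> \<open>z = v \<or> z = w\<close> trace_conflict.prems(2)
      by (auto simp: pattern_potential_def)
  qed
  then show ?case by simp
next
  case (trace_pass z c a h T R)
  let ?\<Phi> = "pattern_potential u v w"
  have IH: "?\<Phi> a T R \<le> 6" "T = [] \<or> snd (hd T) \<noteq> a \<Longrightarrow> ?\<Phi> a T R \<le> 5"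
    using trace_pass.IH trace_pass.prems trace_pass.hyps(2) by auto
  have "z \<noteq> u" "z = v \<or> z = w"
    using trace_pass.hyps(1) trace_pass.prems(1,3) by auto
  then have step: "?\<Phi> a ((z, c) # T) ((z, c) # R)
      = - (if z = v then 1 else 0) - 2 * (if z = w then 1 else 0) + ?\<Phi> a T R"
    by (auto simp: pattern_potential_def)
  show ?case
  proof (cases "z = v")
    case True
    have "T = [] \<or> snd (hd T) \<noteq> a"
      if "\<not> (2 \<le> length ((z, c) # T) \<and> snd (((z, c) # T) ! 1) = a)"
      using that by (cases T) auto
    then show ?thesis
      using step True IH trace_pass.prems(2) by auto
  next
    case False
    then show ?thesis
      using step \<open>z = v \<or> z = w\<close> IH(1) by simp
  qed
qed (simp_all add: pattern_potential_def)

text \<open>With a single out-neighbour, the two steps of T after a conflict are passes.\<close>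
lemma trace_ext_one_nbr_bound:
  assumes "trace_ext {v} u \<beta>u h a T R" "u \<noteq> v"
  shows "3 * num_recol R u \<le> length T + 5
   \<and> ((T = [] \<or> snd (hd T) \<noteq> a) \<longrightarrow> 3 * num_recol R u \<le> length T + 4)
   \<and> ((\<forall>j<2. j < length T \<longrightarrow> snd (T ! j) \<noteq> a) \<longrightarrow> 3 * num_recol R u \<le> length T + 3)"
  using assms
proof (induction rule: trace_ext.induct)
  case (trace_conflict z h a T b R)
  have "z = v" using trace_conflict.hyps(1) by simp
  then have bc: "best_choice {v} \<beta>u h (h(v := a)) (a # map snd T) b"
    using trace_conflict.hyps(2) by simp
  have "\<forall>j<2. j < length T \<longrightarrow> snd (T ! j) \<noteq> b"
    using best_choice_next_one_nbr[OF bc] by blast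
  then have "3 * num_recol R u \<le> length T + 3"
    using trace_conflict.IH trace_conflict.prems by blast
  moreover have "z \<noteq> u"
    using \<open>z = v\<close> trace_conflict.prems by simp
  moreover have "\<not> (\<forall>j<2. j < length ((z, a) # T) \<longrightarrow> snd (((z, a) # T) ! j) \<noteq> a)"
  proof
    assume "\<forall>j<2. j < length ((z, a) # T) \<longrightarrow> snd (((z, a) # T) ! j) \<noteq> a"
    from this[rule_format, of 0] show False by simp
  qed
  ultimately show ?case by (simp only: num_recol_Cons) simp
next
  case (trace_pass z c a h T R)
  have "z \<noteq> u" using trace_pass.hyps(1) trace_pass.prems by auto
  have "3 * num_recol R u \<le> length T + 5"
    and IH2: "T = [] \<or> snd (hd T) \<noteq> a \<Longrightarrow> 3 * num_recol R u \<le> length T + 4"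
    using trace_pass.IH trace_pass.prems by blast+
  moreover have "3 * num_recol R u \<le> length T + 4"
    if "\<forall>j<2. j < length ((z, c) # T) \<longrightarrow> snd (((z, c) # T) ! j) \<noteq> a"
  proof (rule IH2)
    show "T = [] \<or> snd (hd T) \<noteq> a"
      using that[rule_format, of 1] by (cases T) simp_all
  qed
  ultimately show ?case using \<open>z \<noteq> u\<close> by auto
qed simp_all

definition bad_triple_potential :: "'a \<Rightarrow> nat option \<Rightarrow> nat option \<Rightarrow> 'a option
    \<Rightarrow> ('a \<times> nat) list \<Rightarrow> ('a \<times> nat) list \<Rightarrow> int" where
  "bad_triple_potential y p q l T Y = int (bad_triples_after p q (colors_of Y y))
     + 2 * int (num_recol Y y) - int (length T) - int (repeat_count l T)"

text \<open>Here p, q are the two previous colours of y, q its current one, and l is the vertex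
  recoloured by the previous step of T.\<close>
lemma trace_ext_bad_triple_potential:
  assumes "trace_ext N y \<beta>y h a T Y" "N = {u, v}" "y \<notin> N" "\<forall>n\<in>N. h n \<noteq> a"
    and "set_option q \<subseteq> {a}"
  shows "bad_triple_potential y p q l T Y \<le> 5
   \<and> (z0 \<in> N \<longrightarrow> set_option p \<subseteq> {h z0} \<longrightarrow>
        (l = Some z0 \<and> (T = [] \<or> snd (hd T) \<noteq> a) \<longrightarrow> bad_triple_potential y p q l T Y \<le> 3)
      \<and> (l \<noteq> Some z0 \<longrightarrow> bad_triple_potential y p q l T Y \<le> 4))"
  using assms
proof (induction arbitrary: p q l z0 rule: trace_ext.induct)
  case (trace_end_final a h)
  have "bad_triples_after p q [\<beta>y] \<le> 1"
    using bad_triples_after_le_length[of p q "[\<beta>y]"] by simp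
  then show ?case by (simp add: bad_triple_potential_def)
next
  case (trace_conflict z h a T b Y)
  let ?\<Phi> = "bad_triple_potential y"
  have valid: "valid_col N h (h(z := a)) b"
    using best_choice_valid[OF trace_conflict.hyps(2)] .
  then have "a \<noteq> b" and inv: "\<forall>n\<in>N. (h(z := a)) n \<noteq> b"
    using trace_conflict.hyps(1) by (auto simp: valid_col_def)
  have "T = [] \<or> snd (hd T) \<noteq> b"
    using best_choice_next_two_nbrs[OF trace_conflict.hyps(2,1)] trace_conflict.prems(1) by blast
  moreover have "set_option q \<subseteq> {(h(z := a)) z}" "set_option (Some b) \<subseteq> {b}"
    using trace_conflict.prems(4) by simp_all
  ultimately have IH: "?\<Phi> q (Some b) (Some z) T Y \<le> 3"
    using trace_conflict.IH[of "Some b" q "Some z" z, OF trace_conflict.prems(1,2) inv]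
      trace_conflict.hyps(1) by blast
  have "z \<noteq> y" using trace_conflict.hyps(1) trace_conflict.prems by auto
  then have step: "?\<Phi> p q l ((z, a) # T) ((y, b) # (z, a) # Y)
      = (if closes_bad_triple p q b then 1 else 0) + 1 - (if l = Some z then 1 else 0)
        + ?\<Phi> q (Some b) (Some z) T Y"
    by (simp add: bad_triple_potential_def)
  have "\<not> closes_bad_triple p q b" if "z0 \<in> N" "set_option p \<subseteq> {h z0}"
  proof -
    have "h z0 \<noteq> a" "h z0 \<noteq> b"
      using that(1) trace_conflict.prems(3) valid by (auto simp: valid_col_def)
    then show ?thesis
      using that(2) trace_conflict.prems(4) \<open>a \<noteq> b\<close>
      by (auto simp: closes_bad_triple_def split: option.split)
  qed
  then show ?case
    using step IH by auto
next
  case (trace_pass z c a h T Y)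
  let ?\<Phi> = "bad_triple_potential y"
  have inv: "\<forall>n\<in>N. (h(z := c)) n \<noteq> a"
    using trace_pass.prems(3) trace_pass.hyps(2) by auto
  have IH: "?\<Phi> p q (Some z) T Y \<le> 5"
    "z0 \<in> N \<Longrightarrow> set_option p \<subseteq> {(h(z := c)) z0} \<Longrightarrow> z \<noteq> z0 \<Longrightarrow> ?\<Phi> p q (Some z) T Y \<le> 4"
    using trace_pass.IH[of q p "Some z" z0, OF trace_pass.prems(1,2) inv trace_pass.prems(4)]
    by auto
  have "z \<noteq> y" using trace_pass.hyps(1) trace_pass.prems by auto
  then have step: "?\<Phi> p q l ((z, c) # T) ((z, c) # Y)
      = - 1 - (if l = Some z then 1 else 0) + ?\<Phi> p q (Some z) T Y"
    by (simp add: bad_triple_potential_def)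
  show ?case
    using step IH by (cases "z = z0") auto
qed (simp add: bad_triple_potential_def)

lemma proper_out_nbr_colour:
  assumes "proper_5col V E \<alpha>" "distinct ord" "i < length ord" "n \<in> out_nbrs E ord (ord ! i)"
  shows "\<alpha> n \<noteq> \<alpha> (ord ! i)"
  using out_nbr_later[OF assms(2-4)] assms(1) unfolding proper_5col_def by metis

lemma bcr_out_nbr_trace:
  assumes "bcr V E ord \<alpha> \<beta> 0 S" "distinct ord" "proper_5col V E \<alpha>" "i < length ord"
  defines "y \<equiv> ord ! i" and "N \<equiv> out_nbrs E ord (ord ! i)"
  shows "trace_ext N y (\<beta> y) \<alpha> (\<alpha> y) (restrict_seq S N) (restrict_seq S (insert y N))"
    and "y \<notin> N" and "\<forall>n\<in>N. \<alpha> n \<noteq> \<alpha> y"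
  using bcr_trace_ext[OF assms(1,2,4)] not_in_out_nbrs[OF assms(2,4) order.refl]
    proper_out_nbr_colour[OF assms(3,2,4)] unfolding y_def N_def by blast+

lemma bcr_recolour_bound:
  assumes "bcr V E ord \<alpha> \<beta> 0 S" "distinct ord" "proper_5col V E \<alpha>" "i < length ord"
    and "out_nbrs E ord (ord ! i) = {u, v}" "u \<noteq> v"
  shows "2 * num_recol S (ord ! i) + handover_count u v (\<alpha> u) (restrict_seq S {u, v})
      \<le> num_recol S u + num_recol S v + 3"
proof -
  note trace = bcr_out_nbr_trace[OF assms(1-4), unfolded assms(5)]
  have "recolour_potential u v (ord ! i) (\<alpha> u) (restrict_seq S {u, v})
      (restrict_seq S (insert (ord ! i) {u, v})) \<le> 3"
    using trace_ext_recolour_potential[OF trace(1) refl assms(6) trace(2,3)] by blast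
  then show ?thesis
    by (simp add: recolour_potential_def num_recol_restrict_seq length_restrict_seq_pair[OF assms(6)])
qed

lemma bcr_bad_triples_bound:
  assumes "bcr V E ord \<alpha> \<beta> 0 S" "distinct ord" "proper_5col V E \<alpha>" "i < length ord"
    and "out_nbrs E ord (ord ! i) = {u, v}" "u \<noteq> v" "u \<noteq> w" "v \<noteq> w"
  shows "bad_triples (colors_of S (ord ! i)) + 2 * num_recol S (ord ! i)
      + 2 * pattern_count (restrict_seq S {u, v, w}) u w v \<le> 2 * num_recol S u + 2 * num_recol S v + 5"
proof -
  note trace = bcr_out_nbr_trace[OF assms(1-4), unfolded assms(5)]
  have "bad_triple_potential (ord ! i) None None None (restrict_seq S {u, v})
      (restrict_seq S (insert (ord ! i) {u, v})) \<le> 5"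
    using trace_ext_bad_triple_potential[OF trace(1) refl trace(2,3)] by simp
  moreover have "repeat_count None (restrict_seq S {u, v})
      + 2 * return_count u v (restrict_seq S {u, v}) \<le> length (restrict_seq S {u, v})"
    by (rule repeat_count_return_count_le_length[OF assms(6)])
  moreover have "pattern_count (restrict_seq S {u, v, w}) u w v \<le> return_count u v (restrict_seq S {u, v})"
    using pattern_count_le_return_count[OF assms(7,8), of "restrict_seq S {u, v, w}"]
    by (simp add: restrict_seq_restrict_seq)
  ultimately show ?thesis
    by (simp add: bad_triple_potential_def bad_triples_after_None colors_of_restrict_seq
      num_recol_restrict_seq length_restrict_seq_pair[OF assms(6)])
qed

lemma bcr_pattern_bound:
  assumes "bcr V E ord \<alpha> \<beta> 0 S" "distinct ord" "proper_5col V E \<alpha>" "i < length ord"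
    and "out_nbrs E ord (ord ! i) = {v, w}" "v \<noteq> w"
  defines "u \<equiv> ord ! i"
  shows "4 * num_recol S u \<le> 6 + 2 * handover_count u v (\<alpha> u) (restrict_seq S {u, v})
      + num_recol S v + 2 * num_recol S w + pattern_count (restrict_seq S {u, v, w}) u w v"
proof -
  note trace = bcr_out_nbr_trace[OF assms(1-4), unfolded assms(5), folded u_def]
  have "pattern_potential u v w (\<alpha> u) (restrict_seq S {v, w}) (restrict_seq S {u, v, w}) \<le> 6"
    using trace_ext_pattern_potential[OF trace(1) refl assms(6) trace(2,3)] by blast
  moreover have "handover_count u v (\<alpha> u) (restrict_seq S {u, v, w})
      \<le> handover_count u v (\<alpha> u) (restrict_seq S {u, v})"
    using handover_count_le_restrict_seq[of u v "\<alpha> u" "restrict_seq S {u, v, w}"]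
    by (simp add: restrict_seq_restrict_seq)
  ultimately show ?thesis
    by (simp add: pattern_potential_def num_recol_restrict_seq)
qed

lemma bcr_one_out_nbr_bound:
  assumes "bcr V E ord \<alpha> \<beta> 0 S" "distinct ord" "proper_5col V E \<alpha>" "i < length ord"
    and "out_nbrs E ord (ord ! i) = {v}"
  shows "3 * num_recol S (ord ! i) \<le> num_recol S v + 5"
proof -
  note trace = bcr_out_nbr_trace[OF assms(1-4), unfolded assms(5)]
  have "ord ! i \<noteq> v" using trace(2) by simp
  then show ?thesis
    using trace_ext_one_nbr_bound[OF trace(1)]
    by (simp add: num_recol_restrict_seq length_restrict_seq_singleton)
qed

lemma num_recol_le_Max_later:
  assumes "z \<in> (!) ord ` {i<..<length ord}"
  shows "num_recol S z \<le> Max {num_recol S (ord ! i') | i'. i < i' \<and> i' < length ord}"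
proof (rule Max_ge)
  have "{num_recol S (ord ! i') | i'. i < i' \<and> i' < length ord}
      = (\<lambda>i'. num_recol S (ord ! i')) ` {i<..<length ord}" by auto
  then show "finite {num_recol S (ord ! i') | i'. i < i' \<and> i' < length ord}" by simp
qed (use assms in auto)

lemma bad_triples_colors_of_le: "bad_triples (colors_of S y) \<le> num_recol S y"
  using bad_triples_le_length by (simp add: num_recol_def)

lemma out_nbrs_chain:
  assumes "distinct ord" "i < length ord"
    and "out_nbrs E ord (ord ! i) = {u, v}" "out_nbrs E ord u = {v, w}"
  obtains iu where "iu < length ord" "ord ! iu = u"
    and "{u, v, w} \<subseteq> (!) ord ` {i<..<length ord}" and "u \<noteq> v" "u \<noteq> w"
proof -
  obtain iu where iu: "i < iu" "iu < length ord" "ord ! iu = u"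
    using out_nbr_later[OF assms(1,2)] assms(3) by blast
  have later: "\<exists>j. iu < j \<and> j < length ord \<and> ord ! j = z" if "z \<in> {v, w}" for z
    using out_nbr_later[OF assms(1) iu(2)] that assms(4) iu(3) by blast
  then have all: "{u, v, w} \<subseteq> (!) ord ` {i<..<length ord}"
    using iu by (force intro: order.strict_trans)
  have neq: "u \<noteq> z" if z: "z \<in> {v, w}" for z
  proof -
    obtain j where "iu < j" "j < length ord" "ord ! j = z"
      using later[OF z] by blast
    then show ?thesis
      using iu assms(1) by (auto simp: nth_eq_iff_index_eq)
  qed
  show thesis
    using that[OF iu(2,3) all neq neq] by simp
qed

theorem lemma5:
  fixes V :: "'a set" and E :: "'a \<Rightarrow> 'a \<Rightarrow> bool" and ord :: "'a list"
    and \<alpha> \<beta> :: "'a \<Rightarrow> nat" and S :: "('a \<times> nat) list"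
    and x u v w :: 'a and i :: nat
  assumes "simple_graph V E"
    and "chordal V E"
    and "clique_number V E = 3"
    and "perfect_elim_ordering V E ord"
    and "proper_5col V E \<alpha>" and "proper_5col V E \<beta>"
    and "best_choice_recoloring V E ord \<alpha> \<beta> S"
    and "x \<in> V" and "u \<in> V" and "v \<in> V" and "w \<in> V"
    and "out_nbrs E ord x = {u, v}" and "out_nbrs E ord u = {v, w}"
    and "i < length ord" and "ord ! i = x"
    and "int (num_recol S x)
           \<ge> int (Max {num_recol S (ord ! i') | i'. i < i' \<and> i' < length ord}) - 1"
  shows "int (pattern_count (restrict_seq S {u, v, w}) u w v)
           \<ge> int (Max {num_recol S (ord ! i') | i'. i < i' \<and> i' < length ord}) - 34
         \<and> bad_triples (colors_of S x) \<le> 74"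
proof -
  let ?c = "Max {num_recol S (ord ! i') | i'. i < i' \<and> i' < length ord}"
  have dist: "distinct ord" and bcr: "bcr V E ord \<alpha> \<beta> 0 S"
    using assms(4,7) by (simp_all add: perfect_elim_ordering_def best_choice_recoloring_def)
  have x_nbrs: "out_nbrs E ord (ord ! i) = {u, v}"
    using assms(12,15) by simp
  obtain iu where iu: "iu < length ord" "ord ! iu = u"
    and later: "{u, v, w} \<subseteq> (!) ord ` {i<..<length ord}" and "u \<noteq> v" "u \<noteq> w"
    by (rule out_nbrs_chain[OF dist assms(14) x_nbrs assms(13)])
  then have c: "num_recol S u \<le> ?c" "num_recol S v \<le> ?c" "num_recol S w \<le> ?c"
    by (simp_all add: num_recol_le_Max_later)
  have x: "2 * num_recol S x + handover_count u v (\<alpha> u) (restrict_seq S {u, v})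
      \<le> num_recol S u + num_recol S v + 3"
    using bcr_recolour_bound[OF bcr dist assms(5,14) x_nbrs \<open>u \<noteq> v\<close>] assms(15) by simp
  have u_nbrs: "out_nbrs E ord (ord ! iu) = {v, w}"
    using iu(2) assms(13) by simp
  show ?thesis
  proof (cases "v = w")
    case True
    then have "3 * num_recol S u \<le> num_recol S v + 5"
      using bcr_one_out_nbr_bound[OF bcr dist assms(5) iu(1)] u_nbrs iu(2) by simp
    then show ?thesis
      using assms(16) c x bad_triples_colors_of_le[of S x] by (intro conjI; linarith)
  next
    case False
    have "4 * num_recol S u \<le> 6 + 2 * handover_count u v (\<alpha> u) (restrict_seq S {u, v})
        + num_recol S v + 2 * num_recol S w + pattern_count (restrict_seq S {u, v, w}) u w v"
      using bcr_pattern_bound[OF bcr dist assms(5) iu(1) u_nbrs False] iu(2) by simp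
    moreover have "bad_triples (colors_of S x) + 2 * num_recol S x
        + 2 * pattern_count (restrict_seq S {u, v, w}) u w v \<le> 2 * num_recol S u + 2 * num_recol S v + 5"
      using bcr_bad_triples_bound[OF bcr dist assms(5,14) x_nbrs \<open>u \<noteq> v\<close> \<open>u \<noteq> w\<close> False]
        assms(15) by simp
    ultimately show ?thesis
      using assms(16) c x by (intro conjI; linarith)
  qed
qed

end
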